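(* Let $n\ge 2$, $a,b,c\in\mathbb{Z}_n$ and $P(x,y)=a+bx+cy$. Then $(\mathbb{Z}_n,* )$ with $x*y=P(x,y)$ is a quasigroup satisfying the Abel-Grassman law if and only if $c^2\equiv b\pmod n$ and $\gcd(b,n)=\gcd(c,n)=1$.
   Context: $\mathbb{Z}_n$ is the ring of integers modulo $n$. A groupoid $(G,\cdot)$ is a quasigroup if for all $u,v\in G$ the equations $u\cdot x=v$ and $y\cdot u=v$ have unique solutions. The Abel-Grassman law is $x\cdot(y\cdot z)=z\cdot(y\cdot x)$ for all $x,y,z$. *)

theory Defs
  imports "HOL-Number_Theory.Cong"
begin

definition Zn :: "int \<Rightarrow> int set" where
  "Zn n = {0..<n}"

definition quasigroup_on :: "'a set \<Rightarrow> ('a \<Rightarrow> 'a \<Rightarrow> 'a) \<Rightarrow> bool" where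
  "quasigroup_on G f \<longleftrightarrow>
     (\<forall>x\<in>G. \<forall>y\<in>G. f x y \<in> G) \<and>
     (\<forall>u\<in>G. \<forall>v\<in>G. (\<exists>!x. x \<in> G \<and> f u x = v) \<and> (\<exists>!y. y \<in> G \<and> f y u = v))"

definition abel_grassman_on :: "'a set \<Rightarrow> ('a \<Rightarrow> 'a \<Rightarrow> 'a) \<Rightarrow> bool" where
  "abel_grassman_on G f \<longleftrightarrow>
     (\<forall>x\<in>G. \<forall>y\<in>G. \<forall>z\<in>G. f x (f y z) = f z (f y x))"

definition linop :: "int \<Rightarrow> int \<Rightarrow> int \<Rightarrow> int \<Rightarrow> int \<Rightarrow> int \<Rightarrow> int" where
  "linop n a b c x y = (a + b * x + c * y) mod n"

end

theory Submission
  imports Defs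
begin

(* The translations y \<mapsto> u * y and x \<mapsto> x * u of x * y = a + b x + c y are affine maps of
   Z_n with slopes c and b, and an affine map of Z_n is bijective iff its slope is a unit.
   Since x * (y * z) = a + c a + c b y + b x + c^2 z, the Abel-Grassman law amounts to
   (b - c^2)(x - z) = 0 for all x, z, i.e. to c^2 = b. *)

lemma bij_betw_iff_ex1:
  "bij_betw f A B \<longleftrightarrow> (\<forall>x\<in>A. f x \<in> B) \<and> (\<forall>y\<in>B. \<exists>!x. x \<in> A \<and> f x = y)"
  unfolding bij_betw_def inj_on_def image_def by blast

lemma quasigroup_on_iff_translations_bij:
  "quasigroup_on G f \<longleftrightarrow> (\<forall>u\<in>G. bij_betw (f u) G G \<and> bij_betw (\<lambda>y. f y u) G G)"
proof -
  \<comment> \<open>abstracted over the predicates so that blast treats the \<exists>! as opaque\<close>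
  have "(\<forall>x\<in>G. \<forall>y\<in>G. P x y) \<and> (\<forall>u\<in>G. \<forall>v\<in>G. Q u v \<and> R u v) \<longleftrightarrow>
    (\<forall>u\<in>G. ((\<forall>x\<in>G. P u x) \<and> (\<forall>v\<in>G. Q u v)) \<and> ((\<forall>x\<in>G. P x u) \<and> (\<forall>v\<in>G. R u v)))"
    for P Q R :: "'a \<Rightarrow> 'a \<Rightarrow> bool"
    by blast
  then show ?thesis
    unfolding quasigroup_on_def bij_betw_iff_ex1 .
qed

lemma affine_mod_bij_iff_coprime:
  fixes n k d :: int
  assumes "n > 0"
  shows "bij_betw (\<lambda>x. (d + k * x) mod n) {0..<n} {0..<n} \<longleftrightarrow> coprime k n"
proof
  assume "bij_betw (\<lambda>x. (d + k * x) mod n) {0..<n} {0..<n}"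
  moreover have "(d + 1) mod n \<in> {0..<n}" using assms by simp
  ultimately have "(d + 1) mod n \<in> (\<lambda>x. (d + k * x) mod n) ` {0..<n}"
    by (simp add: bij_betw_def)
  then obtain x where "(d + k * x) mod n = (d + 1) mod n" by auto
  then have "[d + k * x = d + 1] (mod n)" by (simp add: cong_def)
  then have "[k * x = 1] (mod n)" by (simp add: cong_add_lcancel)
  then show "coprime k n" using coprime_iff_invertible_int by blast
next
  assume coprime: "coprime k n"
  have "inj_on (\<lambda>x. (d + k * x) mod n) {0..<n}"
  proof (rule inj_onI)
    fix x y :: int
    assume bounds: "x \<in> {0..<n}" "y \<in> {0..<n}"
      and "(d + k * x) mod n = (d + k * y) mod n"
    then have "[d + k * x = d + k * y] (mod n)" by (simp add: cong_def)
    then have "[x = y] (mod n)" by (simp add: cong_add_lcancel cong_mult_lcancel[OF coprime])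
    then show "x = y" using bounds cong_less_imp_eq_int by auto
  qed
  moreover have "(\<lambda>x. (d + k * x) mod n) ` {0..<n} \<subseteq> {0..<n}" using assms by auto
  ultimately show "bij_betw (\<lambda>x. (d + k * x) mod n) {0..<n} {0..<n}"
    by (simp add: bij_betw_def endo_inj_surj)
qed

lemma quasigroup_on_linop_iff:
  fixes n a b c :: int
  assumes "n > 0"
  shows "quasigroup_on (Zn n) (linop n a b c) \<longleftrightarrow> coprime b n \<and> coprime c n"
proof -
  have linop_affine:
    "linop n a b c u = (\<lambda>x. ((a + b * u) + c * x) mod n)"
    "(\<lambda>y. linop n a b c y u) = (\<lambda>y. ((a + c * u) + b * y) mod n)" for u
    by (simp_all add: fun_eq_iff linop_def add_ac)
  have "bij_betw (linop n a b c u) (Zn n) (Zn n) \<longleftrightarrow> coprime c n" for u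
    unfolding Zn_def linop_affine(1) by (rule affine_mod_bij_iff_coprime[OF assms])
  moreover have "bij_betw (\<lambda>y. linop n a b c y u) (Zn n) (Zn n) \<longleftrightarrow> coprime b n" for u
    unfolding Zn_def linop_affine(2) by (rule affine_mod_bij_iff_coprime[OF assms])
  moreover have "0 \<in> Zn n" using assms by (simp add: Zn_def)
  ultimately show ?thesis
    unfolding quasigroup_on_iff_translations_bij by blast
qed

lemma linop_linop:
  "linop n a b c x (linop n a b c y z) = (a + c * a + c * b * y + b * x + c^2 * z) mod n"
proof -
  have "linop n a b c x (linop n a b c y z) = (a + b * x + c * (a + b * y + c * z)) mod n"
    unfolding linop_def by (metis mod_add_right_eq mod_mult_right_eq)
  also have "\<dots> = (a + c * a + c * b * y + b * x + c^2 * z) mod n"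
    by (simp add: algebra_simps power2_eq_square)
  finally show ?thesis .
qed

lemma abel_grassman_on_linop_iff:
  fixes n a b c :: int
  assumes "n > 0"
  shows "abel_grassman_on (Zn n) (linop n a b c) \<longleftrightarrow> [c^2 = b] (mod n)"
proof
  assume "abel_grassman_on (Zn n) (linop n a b c)"
  \<comment> \<open>1 mod n rather than 1, so that n = 1 needs no special treatment\<close>
  moreover have "0 \<in> Zn n" "1 mod n \<in> Zn n" using assms by (simp_all add: Zn_def)
  ultimately have
    "linop n a b c (1 mod n) (linop n a b c 0 0) = linop n a b c 0 (linop n a b c 0 (1 mod n))"
    unfolding abel_grassman_on_def by blast
  then have "(a + c * a + b * (1 mod n)) mod n = (a + c * a + c^2 * (1 mod n)) mod n"
    by (simp add: linop_linop)
  then have "[(a + c * a) + b = (a + c * a) + c^2] (mod n)"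
    unfolding cong_def by (metis mod_add_right_eq mod_mult_right_eq mult.right_neutral)
  then show "[c^2 = b] (mod n)" by (simp add: cong_add_lcancel cong_sym_eq)
next
  assume square: "[c^2 = b] (mod n)"
  show "abel_grassman_on (Zn n) (linop n a b c)"
    unfolding abel_grassman_on_def
  proof (intro ballI)
    fix x y z
    have "[(a + c * a + c * b * y) + b * x + c^2 * z = (a + c * a + c * b * y) + c^2 * x + b * z] (mod n)"
      using square by (intro cong_add cong_mult) (simp_all add: cong_sym)
    then show "linop n a b c x (linop n a b c y z) = linop n a b c z (linop n a b c y x)"
      by (simp add: linop_linop cong_def algebra_simps)
  qed
qed

theorem mainTheorem10:
  fixes n a b c :: int
  assumes "n \<ge> 2" and "a \<in> Zn n" and "b \<in> Zn n" and "c \<in> Zn n"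
  shows "(quasigroup_on (Zn n) (linop n a b c) \<and> abel_grassman_on (Zn n) (linop n a b c))
     \<longleftrightarrow> ([c^2 = b] (mod n) \<and> gcd b n = 1 \<and> gcd c n = 1)"
proof -
  have "n > 0" using assms(1) by simp
  then show ?thesis
    by (auto simp: quasigroup_on_linop_iff abel_grassman_on_linop_iff coprime_iff_gcd_eq_1)
qed

end
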